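(* Let $p\ge 1$, let $A\in\mathbb{R}^{n\times d}$ and let $w\in\mathbb{R}^n$ be a unit vector with $A^\top w\ne 0$, and let $v=A^\top w/\|A^\top w\|_2$. Then \[ \|A\|_{\mathcal{S}_p}^p \ge \|ww^\top A\|_{\mathcal{S}_p}^p + \left\|A\left(I-vv^\top\right)\right\|_{\mathcal{S}_p}^p. \]
   Context: For a matrix $M$ with singular values $\sigma_1\ge\sigma_2\ge\cdots$, $\|M\|_{\mathcal{S}_p}=\left(\sum_i\sigma_i(M)^p\right)^{1/p}$. *)

theory Defs
  imports "Jordan_Normal_Form.Char_Poly" "HOL-Computational_Algebra.Polynomial"
begin

(* A^T A is symmetric PSD, so its characteristic polynomial splits over the reals. *)
definition singular_values :: "real mat \<Rightarrow> real multiset" where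
  "singular_values A = image_mset sqrt (proots (char_poly (transpose_mat A * A)))"

definition schatten_norm :: "real \<Rightarrow> real mat \<Rightarrow> real" where
  "schatten_norm p A = (\<Sum>\<sigma>\<in>#singular_values A. \<sigma> powr p) powr (1 / p)"

definition vnorm2 :: "real vec \<Rightarrow> real" where
  "vnorm2 x = sqrt (x \<bullet> x)"

definition outer_prod :: "real vec \<Rightarrow> real vec \<Rightarrow> real mat" where
  "outer_prod x y = mat (dim_vec x) (dim_vec y) (\<lambda>(i, j). x $ i * y $ j)"

end

(* If (u_i) and (e_i) are orthonormal families in R^n and R^d, then
   sum_i |<u_i, A e_i>|^p <= ||A||_p^p: expanding e_i along the right singular vectors of A and u_i
   along the left ones bounds |<u_i, A e_i>| by an average of the singular values with doubly
   substochastic weights (by Parseval and Bessel), and convexity of t^p does the rest.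

   Let a = A^T w, so that a = |a| v, and B = A (I - v v^T). Then B v = 0 and B^T w = 0, hence the
   right singular vectors e_j of B belonging to nonzero singular values s_j are orthogonal to v and
   satisfy A e_j = B e_j, while the left ones u_j = B e_j / s_j are orthogonal to w. The families
   (w, u_j) and (v, e_j) give ||A||_p^p >= <w, A v>^p + sum_j s_j^p = |a|^p + ||B||_p^p.
   Finally w w^T A has Gram matrix a a^T, so its only nonzero singular value is |a|. *)

theory Submission
  imports Defs
begin

section \<open>Vectors and matrices on index prefixes\<close>

(* A vector of R^m is a function nat => real of which only the values below m matter, a matrix is a
   function nat => nat => real, and gram n X is X^T X for a matrix X with n rows. *)

definition dot :: "nat \<Rightarrow> (nat \<Rightarrow> real) \<Rightarrow> (nat \<Rightarrow> real) \<Rightarrow> real" where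
  "dot m x y = (\<Sum>a<m. x a * y a)"

definition orthonormal :: "nat \<Rightarrow> 'i set \<Rightarrow> ('i \<Rightarrow> nat \<Rightarrow> real) \<Rightarrow> bool" where
  "orthonormal m K h \<longleftrightarrow> (\<forall>i\<in>K. \<forall>j\<in>K. dot m (h i) (h j) = (if i = j then 1 else 0))"

definition matvec :: "nat \<Rightarrow> (nat \<Rightarrow> nat \<Rightarrow> real) \<Rightarrow> (nat \<Rightarrow> real) \<Rightarrow> nat \<Rightarrow> real" where
  "matvec m X x a = (\<Sum>b<m. X a b * x b)"

definition gram :: "nat \<Rightarrow> (nat \<Rightarrow> nat \<Rightarrow> real) \<Rightarrow> nat \<Rightarrow> nat \<Rightarrow> real" where
  "gram n X a b = (\<Sum>t<n. X t a * X t b)"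

definition sym_matrix :: "nat \<Rightarrow> (nat \<Rightarrow> nat \<Rightarrow> real) \<Rightarrow> bool" where
  "sym_matrix m X \<longleftrightarrow> (\<forall>a<m. \<forall>b<m. X a b = X b a)"

definition eigenbasis :: "nat \<Rightarrow> (nat \<Rightarrow> nat \<Rightarrow> real) \<Rightarrow> (nat \<Rightarrow> nat \<Rightarrow> real) \<Rightarrow> (nat \<Rightarrow> real) \<Rightarrow> bool" where
  "eigenbasis m X \<psi> \<mu> \<longleftrightarrow>
     orthonormal m {..<m} \<psi> \<and> (\<forall>j<m. \<forall>a<m. matvec m X (\<psi> j) a = \<mu> j * \<psi> j a)"

lemma dot_commute: "dot m x y = dot m y x"
  unfolding dot_def by (simp add: mult.commute)

lemma dot_cong:
  "(\<And>a. a < m \<Longrightarrow> x a = x' a) \<Longrightarrow> (\<And>a. a < m \<Longrightarrow> y a = y' a) \<Longrightarrow> dot m x y = dot m x' y'"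
  unfolding dot_def by (intro sum.cong) auto

lemma dot_scale_left: "dot m (\<lambda>a. c * x a) y = c * dot m x y"
  unfolding dot_def by (simp add: sum_distrib_left mult_ac)

lemma dot_scale_right: "dot m x (\<lambda>a. c * y a) = c * dot m x y"
  unfolding dot_def by (simp add: sum_distrib_left mult_ac)

lemma dot_sum_left:
  assumes "finite I"
  shows "dot m (\<lambda>a. \<Sum>i\<in>I. c i * g i a) y = (\<Sum>i\<in>I. c i * dot m (g i) y)"
proof -
  have "dot m (\<lambda>a. \<Sum>i\<in>I. c i * g i a) y = (\<Sum>a<m. \<Sum>i\<in>I. c i * (g i a * y a))"
    unfolding dot_def by (simp add: sum_distrib_left sum_distrib_right mult_ac)
  also have "\<dots> = (\<Sum>i\<in>I. \<Sum>a<m. c i * (g i a * y a))"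
    by (rule sum.swap)
  finally show ?thesis
    unfolding dot_def by (simp add: sum_distrib_left)
qed

lemma dot_sum_right:
  "finite I \<Longrightarrow> dot m y (\<lambda>a. \<Sum>i\<in>I. c i * g i a) = (\<Sum>i\<in>I. c i * dot m y (g i))"
  using dot_sum_left[of I m c g y] by (simp add: dot_commute)

lemma dot_self_nonneg: "0 \<le> dot m x x"
  unfolding dot_def by (intro sum_nonneg) auto

lemma dot_self_eq_0_iff: "dot m x x = 0 \<longleftrightarrow> (\<forall>a<m. x a = 0)"
  unfolding dot_def by (subst sum_nonneg_eq_0_iff) auto

lemma matvec_cong: "(\<And>b. b < m \<Longrightarrow> x b = x' b) \<Longrightarrow> matvec m X x a = matvec m X x' a"
  unfolding matvec_def by (intro sum.cong) auto

lemma matvec_sum: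
  assumes "finite I"
  shows "matvec m X (\<lambda>b. \<Sum>i\<in>I. c i * g i b) a = (\<Sum>i\<in>I. c i * matvec m X (g i) a)"
proof -
  have "matvec m X (\<lambda>b. \<Sum>i\<in>I. c i * g i b) a = (\<Sum>b<m. \<Sum>i\<in>I. c i * (X a b * g i b))"
    unfolding matvec_def by (simp add: sum_distrib_left mult_ac)
  also have "\<dots> = (\<Sum>i\<in>I. \<Sum>b<m. c i * (X a b * g i b))"
    by (rule sum.swap)
  finally show ?thesis
    unfolding matvec_def by (simp add: sum_distrib_left)
qed

lemma dot_matvec_sym:
  assumes "sym_matrix m X"
  shows "dot m x (matvec m X y) = dot m (matvec m X x) y"
proof -
  have "dot m x (matvec m X y) = (\<Sum>a<m. \<Sum>b<m. x a * X a b * y b)"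
    unfolding dot_def matvec_def by (simp add: sum_distrib_left mult_ac)
  also have "\<dots> = (\<Sum>b<m. \<Sum>a<m. x a * X b a * y b)"
    using assms unfolding sym_matrix_def by (subst sum.swap) (intro sum.cong refl, simp)
  also have "\<dots> = dot m (matvec m X x) y"
    unfolding dot_def matvec_def by (simp add: sum_distrib_left sum_distrib_right mult_ac)
  finally show ?thesis .
qed

lemma sym_matrix_gram: "sym_matrix d (gram n X)"
  unfolding sym_matrix_def gram_def by (simp add: mult.commute)

lemma matvec_gram: "matvec d (gram n X) x a = (\<Sum>t<n. X t a * matvec d X x t)"
proof -
  have "matvec d (gram n X) x a = (\<Sum>b<d. \<Sum>t<n. X t a * (X t b * x b))"
    unfolding matvec_def gram_def by (simp add: sum_distrib_left sum_distrib_right mult_ac)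
  also have "\<dots> = (\<Sum>t<n. \<Sum>b<d. X t a * (X t b * x b))"
    by (rule sum.swap)
  finally show ?thesis
    unfolding matvec_def by (simp add: sum_distrib_left)
qed

lemma dot_matvec_matvec: "dot n (matvec d X x) (matvec d X y) = dot d x (matvec d (gram n X) y)"
proof -
  have "dot n (matvec d X x) (matvec d X y) = (\<Sum>t<n. \<Sum>a<d. x a * (X t a * matvec d X y t))"
    unfolding dot_def matvec_def[of d X x] by (simp add: sum_distrib_left sum_distrib_right mult_ac)
  also have "\<dots> = (\<Sum>a<d. \<Sum>t<n. x a * (X t a * matvec d X y t))"
    by (rule sum.swap)
  finally show ?thesis
    unfolding dot_def matvec_gram by (simp add: sum_distrib_left)
qed

lemma orthonormal_cong:
  assumes "orthonormal m K h" "\<And>i a. i \<in> K \<Longrightarrow> a < m \<Longrightarrow> h i a = h' i a"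
  shows "orthonormal m K h'"
  using assms unfolding orthonormal_def by (metis (no_types, lifting) dot_cong)

lemma orthonormal_basis_rows:
  assumes "orthonormal m {..<m} h" "a < m" "b < m"
  shows "(\<Sum>i<m. h i a * h i b) = (if a = b then 1 else 0)"
proof -
  define Q where "Q = mat m m (\<lambda>(a, i). h i a)"
  have Q: "Q \<in> carrier_mat m m" "transpose_mat Q \<in> carrier_mat m m"
    unfolding Q_def by auto
  have "transpose_mat Q * Q = 1\<^sub>m m"
    using assms(1) unfolding Q_def orthonormal_def dot_def
    by (intro eq_matI) (auto simp: scalar_prod_def atLeast0LessThan)
  then have "Q * transpose_mat Q = 1\<^sub>m m"
    using mat_mult_left_right_inverse[OF Q(2) Q(1)] by simp
  then have "(Q * transpose_mat Q) $$ (a, b) = 1\<^sub>m m $$ (a, b)"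
    by simp
  then show ?thesis
    using assms(2,3) unfolding Q_def by (simp add: scalar_prod_def atLeast0LessThan)
qed

lemma orthonormal_basis_expansion:
  assumes "orthonormal m {..<m} h" "a < m"
  shows "x a = (\<Sum>i<m. dot m x (h i) * h i a)"
proof -
  have "(\<Sum>i<m. dot m x (h i) * h i a) = (\<Sum>i<m. \<Sum>b<m. x b * h i b * h i a)"
    unfolding dot_def by (simp add: sum_distrib_right)
  also have "\<dots> = (\<Sum>b<m. x b * (\<Sum>i<m. h i a * h i b))"
    by (subst sum.swap) (simp add: sum_distrib_left mult_ac)
  also have "\<dots> = x a"
    using assms by (simp add: orthonormal_basis_rows if_distrib[of "\<lambda>t. _ * t"] cong: if_cong)
  finally show ?thesis by simp
qed

lemma parseval_identity:
  assumes "orthonormal m {..<m} h"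
  shows "dot m x y = (\<Sum>i<m. dot m x (h i) * dot m y (h i))"
proof -
  have "dot m x y = dot m x (\<lambda>a. \<Sum>i<m. dot m y (h i) * h i a)"
    using orthonormal_basis_expansion[OF assms] by (intro dot_cong) auto
  also have "\<dots> = (\<Sum>i<m. dot m x (h i) * dot m y (h i))"
    by (subst dot_sum_right) (simp_all add: mult.commute)
  finally show ?thesis .
qed

lemma dot_sum_orthonormal:
  assumes "finite K" "orthonormal m K g"
  shows "dot m (\<lambda>a. \<Sum>i\<in>K. x i * g i a) (\<lambda>a. \<Sum>i\<in>K. y i * g i a) = (\<Sum>i\<in>K. x i * y i)"
proof -
  have "dot m (\<lambda>a. \<Sum>i\<in>K. x i * g i a) (\<lambda>a. \<Sum>i\<in>K. y i * g i a)
      = (\<Sum>i\<in>K. x i * (\<Sum>j\<in>K. y j * dot m (g i) (g j)))"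
    using assms(1) by (simp add: dot_sum_left dot_sum_right)
  also have "\<dots> = (\<Sum>i\<in>K. x i * y i)"
    using assms unfolding orthonormal_def
    by (intro sum.cong refl) (simp add: if_distrib[of "\<lambda>t. _ * t"] cong: if_cong)
  finally show ?thesis .
qed

lemma dot_diff_self: "dot m (\<lambda>a. x a - y a) (\<lambda>a. x a - y a) = dot m x x - 2 * dot m x y + dot m y y"
  unfolding dot_def by (simp add: algebra_simps sum.distrib sum_subtractf sum_distrib_left)

lemma bessel_inequality:
  assumes "finite K" "orthonormal m K g"
  shows "(\<Sum>i\<in>K. (dot m x (g i))\<^sup>2) \<le> dot m x x"
proof -
  define c where "c i = dot m x (g i)" for i
  define s where "s a = (\<Sum>i\<in>K. c i * g i a)" for a
  have xs: "dot m x s = (\<Sum>i\<in>K. (c i)\<^sup>2)"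
    unfolding s_def using assms(1) by (simp add: dot_sum_right c_def power2_eq_square)
  have ss: "dot m s s = (\<Sum>i\<in>K. (c i)\<^sup>2)"
    unfolding s_def using dot_sum_orthonormal[OF assms] by (simp add: power2_eq_square)
  have "0 \<le> dot m (\<lambda>a. x a - s a) (\<lambda>a. x a - s a)"
    by (rule dot_self_nonneg)
  then show ?thesis
    unfolding dot_diff_self xs ss c_def by simp
qed

section \<open>The spectral theorem for real symmetric matrices\<close>

lemma sym_matrix_complex_eigenvalue_real:
  fixes X :: "nat \<Rightarrow> nat \<Rightarrow> real" and z :: "nat \<Rightarrow> complex"
  assumes X: "sym_matrix m X"
    and ev: "\<And>a. a < m \<Longrightarrow> (\<Sum>b<m. of_real (X a b) * z b) = c * z a"
    and nz: "a0 < m" "z a0 \<noteq> 0"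
  shows "c \<in> \<real>"
proof -
  define s where "s = (\<Sum>a<m. \<Sum>b<m. cnj (z a) * of_real (X a b) * z b)"
  define N where "N = (\<Sum>a<m. (cmod (z a))\<^sup>2)"
  have "s = (\<Sum>a<m. cnj (z a) * (\<Sum>b<m. of_real (X a b) * z b))"
    unfolding s_def by (simp add: sum_distrib_left mult_ac)
  also have "\<dots> = c * (\<Sum>a<m. cnj (z a) * z a)"
    using ev by (simp add: sum_distrib_left mult_ac)
  also have "(\<Sum>a<m. cnj (z a) * z a) = of_real N"
    unfolding N_def of_real_sum
    by (intro sum.cong refl) (simp only: of_real_power[symmetric] complex_norm_square mult.commute)
  finally have sN: "s = c * of_real N" .
  have "cnj s = (\<Sum>b<m. \<Sum>a<m. z a * of_real (X a b) * cnj (z b))"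
    unfolding s_def by (subst sum.swap) (simp add: cnj_sum)
  also have "\<dots> = s"
    using X unfolding s_def sym_matrix_def by (intro sum.cong refl) (simp add: mult_ac)
  finally have "cnj s = s" .
  moreover have "N > 0"
    unfolding N_def using nz by (intro sum_pos2[of _ a0]) auto
  ultimately have "cnj c = c"
    using sN by (metis complex_cnj_complex_of_real complex_cnj_mult mult_cancel_right of_real_eq_0_iff
        order_less_irrefl)
  then show ?thesis
    using Reals_cnj_iff by blast
qed

lemma sym_matrix_unit_eigenvector:
  assumes m: "0 < m" and X: "sym_matrix m X"
  obtains \<mu> z where "dot m z z = 1" "\<And>a. a < m \<Longrightarrow> matvec m X z a = \<mu> * z a"
proof -
  define XJ where "XJ = mat m m (\<lambda>(a, b). X a b)"
  have XJ: "XJ \<in> carrier_mat m m"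
    unfolding XJ_def by simp
  define Xc where "Xc = map_mat complex_of_real XJ"
  have Xc: "Xc \<in> carrier_mat m m"
    unfolding Xc_def using XJ by simp
  obtain cs where cs: "char_poly Xc = (\<Prod>c\<leftarrow>cs. [:- c, 1:])" "length cs = m"
    using char_poly_factorized[OF Xc] by blast
  define c where "c = cs ! 0"
  have "poly (char_poly Xc) c = 0"
    unfolding cs(1) poly_prod_list prod_list_zero_iff c_def using cs(2) m by force
  then obtain z where "eigenvector Xc z c"
    using eigenvalue_root_char_poly[OF Xc] unfolding eigenvalue_def by blast
  then have zc: "z \<in> carrier_vec m" and "z \<noteq> 0\<^sub>v m" and zev: "Xc *\<^sub>v z = c \<cdot>\<^sub>v z"
    unfolding eigenvector_def using Xc by auto
  then obtain a0 where a0: "a0 < m" "z $ a0 \<noteq> 0"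
    by (metis carrier_vecD eq_vecI index_zero_vec(1,2))
  have "(\<Sum>b<m. of_real (X a b) * z $ b) = c * z $ a" if "a < m" for a
    using arg_cong[OF zev, of "\<lambda>v. v $ a"] that zc
    unfolding Xc_def XJ_def by (simp add: scalar_prod_def atLeast0LessThan)
  then have "c \<in> \<real>"
    using sym_matrix_complex_eigenvalue_real[OF X, of "\<lambda>b. z $ b" c a0] a0 by blast
  then have "poly (char_poly Xc) (of_real (Re c)) = 0"
    using \<open>poly (char_poly Xc) c = 0\<close> by (simp add: Reals_def)
  moreover have "char_poly Xc = map_poly of_real (char_poly XJ)"
    unfolding Xc_def using of_real_hom.char_poly_hom[OF XJ] by simp
  ultimately have "poly (char_poly XJ) (Re c) = 0"
    by (metis of_real_eq_0_iff of_real_hom.poly_map_poly)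
  then obtain y where "eigenvector XJ y (Re c)"
    using eigenvalue_root_char_poly[OF XJ] unfolding eigenvalue_def by blast
  then have yc: "y \<in> carrier_vec m" and "y \<noteq> 0\<^sub>v m" and yev: "XJ *\<^sub>v y = Re c \<cdot>\<^sub>v y"
    unfolding eigenvector_def using XJ by auto
  then obtain b0 where b0: "b0 < m" "y $ b0 \<noteq> 0"
    by (metis carrier_vecD eq_vecI index_zero_vec(1,2))
  define N where "N = dot m (\<lambda>a. y $ a) (\<lambda>a. y $ a)"
  have "N \<noteq> 0"
    unfolding N_def dot_self_eq_0_iff using b0 by blast
  then have N: "N > 0"
    using dot_self_nonneg[of m] unfolding N_def by (simp add: order_less_le)
  define z' where "z' a = (1 / sqrt N) * y $ a" for a
  have "dot m z' z' = (1 / sqrt N) * ((1 / sqrt N) * N)"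
    unfolding z'_def N_def by (simp only: dot_scale_left dot_scale_right)
  then have "dot m z' z' = 1"
    using N by simp
  moreover have "matvec m X z' a = Re c * z' a" if "a < m" for a
    using arg_cong[OF yev, of "\<lambda>v. v $ a"] that yc
    unfolding z'_def XJ_def matvec_def
    by (simp add: scalar_prod_def atLeast0LessThan sum_divide_distrib[symmetric] mult_ac)
  ultimately show ?thesis
    using that by blast
qed

lemma orthonormal_basis_extend:
  assumes m: "0 < m" and z: "dot m z z = 1"
  obtains h where "orthonormal m {..<m} h" "h 0 = z"
proof -
  \<comment> \<open>The rows of the Householder reflection exchanging the first unit vector with \<open>z\<close>;
      if \<open>z\<close> is the first unit vector then \<open>s = 0\<close>, so \<open>t = 0\<close> and the reflection is the identity.\<close>
  define u where "u a = z a - (if a = 0 then 1 else 0)" for a :: nat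
  define s where "s = dot m u u"
  define t where "t = 2 / s"
  define H where "H i a = (if i = a then 1 else 0) - t * u i * u a" for i a :: nat
  have s_eq: "s = 2 - 2 * z 0"
  proof -
    obtain m' where m': "m = Suc m'"
      using m by (cases m) auto
    have "s = (z 0 - 1) * (z 0 - 1) + (\<Sum>a<m'. z (Suc a) * z (Suc a))"
      unfolding s_def dot_def u_def m' sum.lessThan_Suc_shift by simp
    moreover have "1 = z 0 * z 0 + (\<Sum>a<m'. z (Suc a) * z (Suc a))"
      using z unfolding dot_def m' sum.lessThan_Suc_shift by simp
    ultimately show ?thesis
      by (simp add: algebra_simps)
  qed
  have ts: "t * t * s = 2 * t"
    unfolding t_def by (cases "s = 0") (simp_all add: field_simps)
  have "orthonormal m {..<m} H"
    unfolding orthonormal_def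
  proof (intro ballI)
    fix i j assume "i \<in> {..<m}" "j \<in> {..<m}"
    then have i: "i < m" and j: "j < m" by auto
    have \<delta>: "(\<Sum>a<m. (if l = a then 1 else 0) * f a) = f l" if "l < m" for l and f :: "nat \<Rightarrow> real"
      using that by (simp add: if_distrib[of "\<lambda>x. x * _"] cong: if_cong)
    have "dot m (H i) (H j) = (\<Sum>a<m. (if i = a then 1 else 0) * (if j = a then 1 else 0))
        - t * u j * (\<Sum>a<m. (if i = a then 1 else 0) * u a)
        - t * u i * (\<Sum>a<m. (if j = a then 1 else 0) * u a) + t * t * u i * u j * s"
      unfolding H_def s_def dot_def by (simp add: algebra_simps sum.distrib sum_subtractf sum_distrib_left)
    also have "\<dots> = (if i = j then 1 else 0) - 2 * t * u i * u j + t * t * s * u i * u j"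
      using i j by (simp add: \<delta>)
    finally have "dot m (H i) (H j) = (if i = j then 1 else 0) - 2 * t * u i * u j + t * t * s * u i * u j" .
    then show "dot m (H i) (H j) = (if i = j then 1 else 0)"
      by (simp add: ts)
  qed
  moreover have "H 0 a = z a" if a: "a < m" for a
  proof (cases "s = 0")
    case True
    then show ?thesis
      using a unfolding H_def t_def u_def s_def dot_self_eq_0_iff by auto
  next
    case False
    then have "t * u 0 = -1"
      unfolding t_def using s_eq by (simp add: u_def field_simps)
    then show ?thesis
      unfolding H_def by (simp add: u_def mult.assoc)
  qed
  ultimately have "orthonormal m {..<m} (H(0 := z))"
    by (elim orthonormal_cong) auto
  then show ?thesis
    using that by simp
qed

lemma eigenbasis_extend:
  fixes k :: nat and X h :: "nat \<Rightarrow> nat \<Rightarrow> real"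
  defines "Y \<equiv> \<lambda>i j. dot (Suc k) (h (Suc i)) (matvec (Suc k) X (h (Suc j)))"
  assumes X: "sym_matrix (Suc k) X"
    and h: "orthonormal (Suc k) {..<Suc k} h"
    and h0: "\<And>a. a < Suc k \<Longrightarrow> matvec (Suc k) X (h 0) a = \<mu>0 * h 0 a"
    and \<phi>: "eigenbasis k Y \<phi> \<nu>"
  shows "eigenbasis (Suc k) X (case_nat (h 0) (\<lambda>j a. \<Sum>i<k. \<phi> j i * h (Suc i) a)) (case_nat \<mu>0 \<nu>)"
proof -
  define g where "g i = h (Suc i)" for i
  define \<psi> where "\<psi> = case_nat (h 0) (\<lambda>j a. \<Sum>i<k. \<phi> j i * g i a)"
  have g: "orthonormal (Suc k) {..<k} g"
    using h unfolding g_def orthonormal_def by auto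
  have h0g: "dot (Suc k) (h 0) (g i) = 0" if "i < k" for i
    using h that unfolding g_def orthonormal_def by auto
  have \<psi>0: "dot (Suc k) (h 0) (\<psi> (Suc l)) = 0" for l
    unfolding \<psi>_def by (simp add: dot_sum_right h0g)
  have \<psi>S: "dot (Suc k) (\<psi> (Suc j)) (\<psi> (Suc l)) = dot k (\<phi> j) (\<phi> l)" for j l
  proof -
    have "dot (Suc k) (\<psi> (Suc j)) (\<psi> (Suc l)) = (\<Sum>i<k. \<phi> j i * \<phi> l i)"
      unfolding \<psi>_def by (simp add: dot_sum_orthonormal[OF _ g])
    then show ?thesis
      by (simp add: dot_def)
  qed
  have orth: "orthonormal (Suc k) {..<Suc k} \<psi>"
    unfolding orthonormal_def
  proof (intro ballI)
    fix i j assume "i \<in> {..<Suc k}" "j \<in> {..<Suc k}"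
    moreover have "dot (Suc k) (h 0) (h 0) = 1"
      using h unfolding orthonormal_def by simp
    ultimately show "dot (Suc k) (\<psi> i) (\<psi> j) = (if i = j then 1 else 0)"
      using \<phi> \<psi>0 \<psi>S dot_commute[of "Suc k" "\<psi> (Suc _)" "h 0"]
      unfolding eigenbasis_def orthonormal_def by (cases i; cases j) (simp_all add: \<psi>_def)
  qed
  \<comment> \<open>The orthogonal complement of \<open>h 0\<close> is invariant under \<open>X\<close>, and \<open>Y\<close> is \<open>X\<close> restricted to it.\<close>
  have Xg: "matvec (Suc k) X (g i) a = (\<Sum>l<k. Y l i * g l a)" if i: "i < k" and a: "a < Suc k" for i a
  proof -
    have "dot (Suc k) (matvec (Suc k) X (g i)) (h 0) = dot (Suc k) (g i) (\<lambda>a. \<mu>0 * h 0 a)"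
      unfolding dot_matvec_sym[OF X, symmetric] using h0 by (intro dot_cong) auto
    also have "\<dots> = 0"
      using h0g[OF i] by (simp add: dot_scale_right dot_commute[of _ "g i"])
    finally have X0: "dot (Suc k) (matvec (Suc k) X (g i)) (h 0) = 0" .
    have "matvec (Suc k) X (g i) a = (\<Sum>l<Suc k. dot (Suc k) (matvec (Suc k) X (g i)) (h l) * h l a)"
      by (rule orthonormal_basis_expansion[OF h a])
    also have "\<dots> = (\<Sum>l<k. dot (Suc k) (matvec (Suc k) X (g i)) (g l) * g l a)"
      unfolding sum.lessThan_Suc_shift g_def[symmetric] X0 by simp
    also have "\<dots> = (\<Sum>l<k. Y l i * g l a)"
      unfolding Y_def g_def by (simp only: dot_commute[of _ "matvec _ _ _"])
    finally show ?thesis .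
  qed
  have ev: "matvec (Suc k) X (\<psi> j) a = case_nat \<mu>0 \<nu> j * \<psi> j a" if j: "j < Suc k" and a: "a < Suc k" for j a
  proof (cases j)
    case 0
    then show ?thesis
      using h0 a unfolding \<psi>_def by simp
  next
    case (Suc j')
    then have j': "j' < k"
      using j by simp
    have "matvec (Suc k) X (\<psi> j) a = (\<Sum>i<k. \<phi> j' i * (\<Sum>l<k. Y l i * g l a))"
      unfolding \<psi>_def Suc using a by (simp add: matvec_sum Xg)
    also have "\<dots> = (\<Sum>l<k. \<Sum>i<k. \<phi> j' i * (Y l i * g l a))"
      by (subst sum.swap) (simp add: sum_distrib_left)
    also have "\<dots> = (\<Sum>l<k. matvec k Y (\<phi> j') l * g l a)"
      unfolding matvec_def by (simp add: sum_distrib_left sum_distrib_right mult_ac)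
    also have "\<dots> = \<nu> j' * (\<Sum>l<k. \<phi> j' l * g l a)"
      using \<phi> j' unfolding eigenbasis_def by (simp add: sum_distrib_left mult_ac)
    finally show ?thesis
      unfolding \<psi>_def Suc by simp
  qed
  show ?thesis
    using orth ev unfolding eigenbasis_def \<psi>_def g_def by blast
qed

theorem sym_matrix_eigenbasis:
  assumes "sym_matrix m X"
  obtains \<psi> \<mu> where "eigenbasis m X \<psi> \<mu>"
  using assms
proof (induction m arbitrary: X thesis)
  case 0
  then show ?case
    by (simp add: eigenbasis_def orthonormal_def)
next
  case (Suc k)
  obtain \<mu>0 z where z: "dot (Suc k) z z = 1"
    and ev: "\<And>a. a < Suc k \<Longrightarrow> matvec (Suc k) X z a = \<mu>0 * z a"
    using sym_matrix_unit_eigenvector[OF _ Suc.prems(2)] by blast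
  obtain h where h: "orthonormal (Suc k) {..<Suc k} h" and "h 0 = z"
    using orthonormal_basis_extend[OF _ z] by blast
  define Y where "Y i j = dot (Suc k) (h (Suc i)) (matvec (Suc k) X (h (Suc j)))" for i j
  have "sym_matrix k Y"
    unfolding Y_def sym_matrix_def using dot_matvec_sym[OF Suc.prems(2)] dot_commute by metis
  then obtain \<phi> \<nu> where "eigenbasis k Y \<phi> \<nu>"
    using Suc.IH by blast
  then show ?case
    using eigenbasis_extend[OF Suc.prems(2) h, of \<mu>0 \<phi> \<nu>] ev \<open>h 0 = z\<close> Suc.prems(1)
    unfolding Y_def by blast
qed

section \<open>Singular values and Schatten norms\<close>

lemma eigenbasis_decomposition:
  assumes \<psi>: "eigenbasis m X \<psi> \<mu>" and a: "a < m" and b: "b < m"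
  shows "X a b = (\<Sum>j<m. \<mu> j * \<psi> j a * \<psi> j b)"
proof -
  have orth: "orthonormal m {..<m} \<psi>"
    using \<psi> unfolding eigenbasis_def by blast
  have "X a b = (\<Sum>c<m. X a c * (if c = b then 1 else 0))"
    using b by (simp add: if_distrib[of "\<lambda>x. _ * x"] cong: if_cong)
  also have "\<dots> = (\<Sum>c<m. X a c * (\<Sum>j<m. \<psi> j c * \<psi> j b))"
    using orthonormal_basis_rows[OF orth _ b] by simp
  also have "\<dots> = (\<Sum>c<m. \<Sum>j<m. X a c * \<psi> j c * \<psi> j b)"
    by (simp add: sum_distrib_left mult_ac)
  also have "\<dots> = (\<Sum>j<m. matvec m X (\<psi> j) a * \<psi> j b)"
    unfolding matvec_def by (subst sum.swap) (simp add: sum_distrib_right)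
  also have "\<dots> = (\<Sum>j<m. \<mu> j * \<psi> j a * \<psi> j b)"
    using \<psi> a unfolding eigenbasis_def by simp
  finally show ?thesis .
qed

lemma char_poly_eigenbasis:
  assumes XJ: "XJ \<in> carrier_mat m m" and entries: "\<And>a b. a < m \<Longrightarrow> b < m \<Longrightarrow> XJ $$ (a, b) = X a b"
    and \<psi>: "eigenbasis m X \<psi> \<mu>"
  shows "char_poly XJ = (\<Prod>c\<leftarrow>map \<mu> [0..<m]. [:- c, 1:])"
proof -
  have orth: "orthonormal m {..<m} \<psi>"
    using \<psi> unfolding eigenbasis_def by blast
  define Q where "Q = mat m m (\<lambda>(a, j). \<psi> j a)"
  define D where "D = mat m m (\<lambda>(i, j). if i = j then \<mu> i else 0)"
  have Q: "Q \<in> carrier_mat m m" "transpose_mat Q \<in> carrier_mat m m" and D: "D \<in> carrier_mat m m"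
    unfolding Q_def D_def by auto
  have "Q * transpose_mat Q = 1\<^sub>m m"
    using orthonormal_basis_rows[OF orth] unfolding Q_def
    by (intro eq_matI) (auto simp: scalar_prod_def atLeast0LessThan)
  moreover have "transpose_mat Q * Q = 1\<^sub>m m"
    using orth unfolding Q_def orthonormal_def dot_def
    by (intro eq_matI) (auto simp: scalar_prod_def atLeast0LessThan)
  moreover have "XJ = Q * D * transpose_mat Q"
  proof (rule eq_matI)
    fix a b assume "a < dim_row (Q * D * transpose_mat Q)" "b < dim_col (Q * D * transpose_mat Q)"
    then have a: "a < m" and b: "b < m"
      unfolding Q_def D_def by auto
    have QD: "(Q * D) $$ (a, c) = \<mu> c * \<psi> c a" if "c < m" for c
      using a that unfolding Q_def D_def
      by (simp add: scalar_prod_def atLeast0LessThan if_distrib[of "\<lambda>x. _ * x"] cong: if_cong)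
    have "(Q * D * transpose_mat Q) $$ (a, b) = (\<Sum>c<m. (Q * D) $$ (a, c) * \<psi> c b)"
      using a b Q D by (simp add: scalar_prod_def atLeast0LessThan Q_def)
    also have "\<dots> = XJ $$ (a, b)"
      using a b by (simp add: QD entries eigenbasis_decomposition[OF \<psi>])
    finally show "XJ $$ (a, b) = (Q * D * transpose_mat Q) $$ (a, b)" ..
  qed (use XJ Q D in auto)
  ultimately have "similar_mat XJ D"
    unfolding similar_mat_def similar_mat_wit_def Let_def using XJ Q D by blast
  then have "char_poly XJ = char_poly D"
    by (rule char_poly_similar)
  also have "\<dots> = (\<Prod>c\<leftarrow>diag_mat D. [:- c, 1:])"
    by (rule char_poly_upper_triangular[OF D]) (auto simp: upper_triangular_def D_def)
  also have "diag_mat D = map \<mu> [0..<m]"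
    unfolding diag_mat_def D_def by simp
  finally show ?thesis .
qed

lemma proots_prod_linear_factors: "proots (\<Prod>c\<leftarrow>cs. [:- c, 1:]) = mset (cs :: real list)"
proof (induction cs)
  case (Cons c cs)
  have "(\<Prod>c\<leftarrow>cs. [:- c, 1:]) \<noteq> 0"
    by (auto simp: prod_list_zero_iff)
  then have "proots ([:- c, 1:] * (\<Prod>c\<leftarrow>cs. [:- c, 1:])) = proots [:- c, 1:] + proots (\<Prod>c\<leftarrow>cs. [:- c, 1:])"
    by (intro proots_mult) auto
  then show ?case
    using Cons.IH by (simp add: proots_linear_factor)
qed simp

lemma singular_values_eigenbasis:
  assumes M: "M \<in> carrier_mat r d" and \<psi>: "eigenbasis d (gram r (\<lambda>t x. M $$ (t, x))) \<psi> \<mu>"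
  shows "singular_values M = image_mset sqrt (mset (map \<mu> [0..<d]))"
proof -
  have "char_poly (transpose_mat M * M) = (\<Prod>c\<leftarrow>map \<mu> [0..<d]. [:- c, 1:])"
    using M by (intro char_poly_eigenbasis[OF _ _ \<psi>]) (auto simp: gram_def scalar_prod_def atLeast0LessThan)
  then show ?thesis
    unfolding singular_values_def by (simp only: proots_prod_linear_factors)
qed

lemma schatten_norm_powr_eigenbasis:
  assumes M: "M \<in> carrier_mat r d" and \<psi>: "eigenbasis d (gram r (\<lambda>t x. M $$ (t, x))) \<psi> \<mu>"
    and p: "p \<noteq> 0"
  shows "schatten_norm p M powr p = (\<Sum>j<d. sqrt (\<mu> j) powr p)"
proof -
  have "(\<Sum>\<sigma>\<in>#singular_values M. \<sigma> powr p) = (\<Sum>j<d. sqrt (\<mu> j) powr p)"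
    unfolding singular_values_eigenbasis[OF M \<psi>]
    by (simp add: sum_unfold_sum_mset multiset.map_comp o_def atLeast0LessThan)
  moreover have "(\<Sum>j<d. sqrt (\<mu> j) powr p) \<ge> 0"
    by (intro sum_nonneg) simp
  ultimately show ?thesis
    unfolding schatten_norm_def using p by (simp add: powr_powr)
qed

lemma schatten_norm_powr_eigenvalues:
  assumes "M \<in> carrier_mat r d" "p \<noteq> 0"
  obtains \<psi> \<mu> where "eigenbasis d (gram r (\<lambda>t x. M $$ (t, x))) \<psi> \<mu>"
    "schatten_norm p M powr p = (\<Sum>j<d. sqrt (\<mu> j) powr p)"
  using sym_matrix_eigenbasis[OF sym_matrix_gram] schatten_norm_powr_eigenbasis[OF assms(1) _ assms(2)]
  by metis

section \<open>Orthonormal pairings against a matrix\<close>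

lemma powr_above_tangent:
  fixes p x t :: real
  assumes p: "1 \<le> p" and x: "0 \<le> x" and t: "0 \<le> t"
  shows "t powr p + p * t powr (p - 1) * (x - t) \<le> x powr p"
proof -
  have mvt: "\<exists>\<xi>. a < \<xi> \<and> \<xi> < b \<and> b powr p - a powr p = (b - a) * (p * \<xi> powr (p - 1))"
    if "0 < a" "a < b" for a b
    using that MVT2[of a b "\<lambda>y. y powr p" "\<lambda>y. p * y powr (p - 1)"]
    by (force intro!: derivative_eq_intros)
  consider "t = 0 \<or> x = t" | "0 < t" "t < x" | "0 < x" "x < t" | "x = 0" "0 < t"
    using x t by linarith
  then show ?thesis
  proof cases
    case 1
    then show ?thesis
      by auto
  next
    case 2
    then obtain \<xi> where \<xi>: "t < \<xi>" "x powr p - t powr p = (x - t) * (p * \<xi> powr (p - 1))"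
      using mvt by blast
    have "p * t powr (p - 1) * (x - t) \<le> p * \<xi> powr (p - 1) * (x - t)"
      using 2 \<xi>(1) p by (intro mult_right_mono mult_left_mono powr_mono2) auto
    then show ?thesis
      using \<xi>(2) by (simp add: algebra_simps)
  next
    case 3
    then obtain \<xi> where \<xi>: "\<xi> < t" "x < \<xi>" "t powr p - x powr p = (t - x) * (p * \<xi> powr (p - 1))"
      using mvt by blast
    have "p * \<xi> powr (p - 1) * (t - x) \<le> p * t powr (p - 1) * (t - x)"
      using 3 \<xi>(1,2) p by (intro mult_right_mono mult_left_mono powr_mono2) auto
    then show ?thesis
      using \<xi>(3) by (simp add: algebra_simps)
  next
    case 4
    then have "t powr p + p * t powr (p - 1) * (x - t) = (1 - p) * t powr p"
      by (simp add: powr_diff algebra_simps)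
    also have "\<dots> \<le> x powr p"
      using 4 p by (simp add: mult_nonpos_nonneg)
    finally show ?thesis .
  qed
qed

lemma powr_substochastic_average_le:
  fixes m \<sigma> :: "'j \<Rightarrow> real"
  assumes J: "finite J" and m: "\<And>j. j \<in> J \<Longrightarrow> 0 \<le> m j" and S: "(\<Sum>j\<in>J. m j) \<le> 1"
    and \<sigma>: "\<And>j. j \<in> J \<Longrightarrow> 0 \<le> \<sigma> j" and p: "1 \<le> p"
  shows "(\<Sum>j\<in>J. m j * \<sigma> j) powr p \<le> (\<Sum>j\<in>J. m j * \<sigma> j powr p)"
proof -
  define t where "t = (\<Sum>j\<in>J. m j * \<sigma> j)"
  define S where "S = (\<Sum>j\<in>J. m j)"
  have t: "0 \<le> t"
    unfolding t_def using m \<sigma> by (intro sum_nonneg) auto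
  \<comment> \<open>Average the tangent inequality at \<open>t\<close>; the missing mass \<open>1 - S\<close> only helps since \<open>p \<ge> 1\<close>.\<close>
  have "0 \<le> (p - 1) * (1 - S)"
    using S p unfolding S_def by simp
  then have "t powr p * 1 \<le> t powr p * (S + p * (1 - S))"
    by (intro mult_left_mono) (simp_all add: algebra_simps)
  then have "t powr p \<le> t powr p * (S + p * (1 - S))"
    by simp
  also have "\<dots> = S * t powr p + p * t powr (p - 1) * (t - S * t)"
  proof -
    have "t powr (p - 1) * t = t powr p"
      using t by (cases "t = 0") (simp_all add: powr_diff)
    then show ?thesis
      by (simp add: algebra_simps flip: \<open>t powr (p - 1) * t = t powr p\<close>)
  qed
  also have "\<dots> = (\<Sum>j\<in>J. m j * (t powr p + p * t powr (p - 1) * (\<sigma> j - t)))"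
  proof -
    have "(\<Sum>j\<in>J. m j * (a + b * (\<sigma> j - c))) = a * (\<Sum>j\<in>J. m j) + b * ((\<Sum>j\<in>J. m j * \<sigma> j) - c * (\<Sum>j\<in>J. m j))"
      for a b c
      by (simp add: algebra_simps sum.distrib sum_subtractf sum_distrib_left)
    from this[of "t powr p" "p * t powr (p - 1)" t] show ?thesis
      unfolding S_def[symmetric] t_def[symmetric] by (simp add: algebra_simps)
  qed
  also have "\<dots> \<le> (\<Sum>j\<in>J. m j * \<sigma> j powr p)"
    using m \<sigma> p t powr_above_tangent by (intro sum_mono mult_left_mono) auto
  finally show ?thesis
    unfolding t_def .
qed

lemma doubly_substochastic_powr_sum_le:
  fixes M :: "'i \<Rightarrow> 'j \<Rightarrow> real"
  assumes I: "finite I" and J: "finite J" and p: "p \<ge> 1"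
    and M: "\<And>i j. i \<in> I \<Longrightarrow> j \<in> J \<Longrightarrow> 0 \<le> M i j"
    and rows: "\<And>i. i \<in> I \<Longrightarrow> (\<Sum>j\<in>J. M i j) \<le> 1"
    and cols: "\<And>j. j \<in> J \<Longrightarrow> (\<Sum>i\<in>I. M i j) \<le> 1"
    and \<sigma>: "\<And>j. j \<in> J \<Longrightarrow> 0 \<le> \<sigma> j"
    and x: "\<And>i. i \<in> I \<Longrightarrow> 0 \<le> x i \<and> x i \<le> (\<Sum>j\<in>J. M i j * \<sigma> j)"
  shows "(\<Sum>i\<in>I. x i powr p) \<le> (\<Sum>j\<in>J. \<sigma> j powr p)"
proof -
  have "(\<Sum>i\<in>I. x i powr p) \<le> (\<Sum>i\<in>I. (\<Sum>j\<in>J. M i j * \<sigma> j) powr p)"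
    using x p by (intro sum_mono powr_mono2) auto
  also have "\<dots> \<le> (\<Sum>i\<in>I. \<Sum>j\<in>J. M i j * \<sigma> j powr p)"
    using J M rows \<sigma> p by (intro sum_mono powr_substochastic_average_le) auto
  also have "\<dots> = (\<Sum>j\<in>J. (\<Sum>i\<in>I. M i j) * \<sigma> j powr p)"
    by (subst sum.swap) (simp add: sum_distrib_right)
  also have "\<dots> \<le> (\<Sum>j\<in>J. \<sigma> j powr p)"
    using cols by (intro sum_mono mult_left_le_one_le) (auto intro!: sum_nonneg M)
  finally show ?thesis .
qed

lemma eigenbasis_gram_images:
  assumes \<psi>: "eigenbasis d (gram n X) \<psi> \<mu>" and i: "i < d" and j: "j < d"
  shows "dot n (matvec d X (\<psi> i)) (matvec d X (\<psi> j)) = (if i = j then \<mu> j else 0)"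
proof -
  have "dot n (matvec d X (\<psi> i)) (matvec d X (\<psi> j)) = dot d (\<psi> i) (\<lambda>a. \<mu> j * \<psi> j a)"
    unfolding dot_matvec_matvec using \<psi> j unfolding eigenbasis_def by (intro dot_cong) auto
  then show ?thesis
    using \<psi> i j unfolding eigenbasis_def orthonormal_def by (simp add: dot_scale_right)
qed

lemma eigenbasis_gram_nonneg:
  assumes "eigenbasis d (gram n X) \<psi> \<mu>" "j < d"
  shows "0 \<le> \<mu> j"
  using eigenbasis_gram_images[OF assms assms(2)] dot_self_nonneg by metis

lemma eigenbasis_gram_image_eq:
  assumes \<psi>: "eigenbasis d (gram n X) \<psi> \<mu>" and j: "j < d" and t: "t < n"
  shows "matvec d X (\<psi> j) t = sqrt (\<mu> j) * (matvec d X (\<psi> j) t / sqrt (\<mu> j))"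
proof (cases "\<mu> j = 0")
  case True
  then have "dot n (matvec d X (\<psi> j)) (matvec d X (\<psi> j)) = 0"
    using eigenbasis_gram_images[OF \<psi> j j] by simp
  then show ?thesis
    using t unfolding dot_self_eq_0_iff by simp
next
  case False
  then show ?thesis
    using eigenbasis_gram_nonneg[OF \<psi> j] by simp
qed

lemma eigenbasis_gram_normalized_images:
  assumes \<psi>: "eigenbasis d (gram n X) \<psi> \<mu>" and i: "i < d" and j: "j < d"
  shows "dot n (\<lambda>t. matvec d X (\<psi> i) t / sqrt (\<mu> i)) (\<lambda>t. matvec d X (\<psi> j) t / sqrt (\<mu> j))
    = (if i = j \<and> 0 < \<mu> j then 1 else 0)"
  using eigenbasis_gram_images[OF \<psi> i j] eigenbasis_gram_nonneg[OF \<psi> j]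
  by (simp add: divide_inverse mult.commute[of _ "inverse _"] dot_scale_left dot_scale_right)
    (simp add: field_simps)

lemma abs_mult_le_half_squares: "\<bar>b * c\<bar> \<le> (b\<^sup>2 + c\<^sup>2) / 2" for b c :: real
proof -
  have "0 \<le> (\<bar>b\<bar> - \<bar>c\<bar>)\<^sup>2"
    by simp
  then show ?thesis
    by (simp add: power2_eq_square abs_mult algebra_simps)
qed

theorem orthonormal_pairing_powr_le:
  assumes \<psi>: "eigenbasis d (gram n X) \<psi> \<mu>" and p: "p \<ge> 1" and K: "finite K"
    and u: "orthonormal n K u" and e: "orthonormal d K e"
  shows "(\<Sum>i\<in>K. \<bar>dot n (u i) (matvec d X (e i))\<bar> powr p) \<le> (\<Sum>j<d. sqrt (\<mu> j) powr p)"
proof -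
  have orth: "orthonormal d {..<d} \<psi>"
    using \<psi> unfolding eigenbasis_def by blast
  \<comment> \<open>Left singular vectors; the junk value \<open>x / 0 = 0\<close> makes \<open>\<phi> j = 0\<close> whenever \<open>\<mu> j = 0\<close>.\<close>
  define \<phi> where "\<phi> j t = matvec d X (\<psi> j) t / sqrt (\<mu> j)" for j t
  \<comment> \<open>Then \<open>|<u i, X e i>| \<le> (\<Sum>j. \<bar>b i j * c i j\<bar> * sqrt (\<mu> j))\<close>, and the weights
      \<open>((b i j)\<^sup>2 + (c i j)\<^sup>2) / 2\<close> are doubly substochastic by Parseval and Bessel.\<close>
  define b where "b i j = dot d (e i) (\<psi> j)" for i j
  define c where "c i j = dot n (u i) (\<phi> j)" for i j
  define Jp where "Jp = {j. j < d \<and> 0 < \<mu> j}"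
  have \<phi>: "dot n (\<phi> i) (\<phi> j) = (if i = j \<and> 0 < \<mu> j then 1 else 0)" if "i < d" "j < d" for i j
    unfolding \<phi>_def by (rule eigenbasis_gram_normalized_images[OF \<psi> that])
  have c0: "c i j = 0" if "j < d" "j \<notin> Jp" for i j
  proof -
    have "\<forall>t<n. \<phi> j t = 0"
      using \<phi>[of j j] that unfolding Jp_def dot_self_eq_0_iff[symmetric] by auto
    then show ?thesis
      unfolding c_def dot_def by simp
  qed
  have expand: "dot n (u i) (matvec d X (e i)) = (\<Sum>j<d. sqrt (\<mu> j) * (b i j * c i j))" for i
  proof -
    have "dot n (u i) (matvec d X (e i)) = dot n (u i) (\<lambda>t. \<Sum>j<d. b i j * matvec d X (\<psi> j) t)"
      unfolding b_def matvec_sum[OF finite_lessThan, symmetric]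
      by (intro dot_cong refl matvec_cong orthonormal_basis_expansion[OF orth])
    also have "\<dots> = (\<Sum>j<d. b i j * dot n (u i) (\<lambda>t. sqrt (\<mu> j) * \<phi> j t))"
      unfolding dot_sum_right[OF finite_lessThan] \<phi>_def
      using eigenbasis_gram_image_eq[OF \<psi>] by (intro sum.cong refl arg_cong2[where f = "(*)"] dot_cong) auto
    finally show ?thesis
      unfolding c_def dot_scale_right by (simp add: mult_ac)
  qed
  have b_rows: "(\<Sum>j<d. (b i j)\<^sup>2) = 1" if "i \<in> K" for i
    using parseval_identity[OF orth, of "e i" "e i"] e that unfolding b_def orthonormal_def
    by (simp add: power2_eq_square)
  have c_rows: "(\<Sum>j<d. (c i j)\<^sup>2) \<le> 1" if "i \<in> K" for i
  proof -
    have "(\<Sum>j<d. (c i j)\<^sup>2) = (\<Sum>j\<in>Jp. (dot n (u i) (\<phi> j))\<^sup>2)"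
      unfolding c_def[symmetric] using c0 by (intro sum.mono_neutral_right) (auto simp: Jp_def)
    also have "\<dots> \<le> dot n (u i) (u i)"
      using \<phi> by (intro bessel_inequality) (auto simp: orthonormal_def Jp_def)
    finally show ?thesis
      using u that unfolding orthonormal_def by simp
  qed
  have b_cols: "(\<Sum>i\<in>K. (b i j)\<^sup>2) \<le> 1" if "j < d" for j
    using bessel_inequality[OF K e, of "\<psi> j"] orth that
    unfolding b_def orthonormal_def by (simp add: dot_commute)
  have c_cols: "(\<Sum>i\<in>K. (c i j)\<^sup>2) \<le> 1" if "j < d" for j
    using bessel_inequality[OF K u, of "\<phi> j"] \<phi>[OF that that]
    unfolding c_def by (simp add: dot_commute split: if_splits)
  have \<sigma>: "0 \<le> sqrt (\<mu> j)" if "j < d" for j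
    using eigenbasis_gram_nonneg[OF \<psi> that] by simp
  have x_le: "\<bar>dot n (u i) (matvec d X (e i))\<bar> \<le> (\<Sum>j<d. ((b i j)\<^sup>2 + (c i j)\<^sup>2) / 2 * sqrt (\<mu> j))" for i
  proof -
    have "\<bar>dot n (u i) (matvec d X (e i))\<bar> \<le> (\<Sum>j<d. \<bar>sqrt (\<mu> j) * (b i j * c i j)\<bar>)"
      unfolding expand by (rule sum_abs)
    also have "\<dots> \<le> (\<Sum>j<d. ((b i j)\<^sup>2 + (c i j)\<^sup>2) / 2 * sqrt (\<mu> j))"
    proof (intro sum_mono)
      fix j assume "j \<in> {..<d}"
      then have "0 \<le> sqrt (\<mu> j)"
        using \<sigma> by simp
      then have "\<bar>sqrt (\<mu> j) * (b i j * c i j)\<bar> = \<bar>b i j * c i j\<bar> * sqrt (\<mu> j)"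
        by (simp add: abs_mult)
      also have "\<dots> \<le> ((b i j)\<^sup>2 + (c i j)\<^sup>2) / 2 * sqrt (\<mu> j)"
        using abs_mult_le_half_squares \<open>0 \<le> sqrt (\<mu> j)\<close> by (rule mult_right_mono)
      finally show "\<bar>sqrt (\<mu> j) * (b i j * c i j)\<bar> \<le> ((b i j)\<^sup>2 + (c i j)\<^sup>2) / 2 * sqrt (\<mu> j)" .
    qed
    finally show ?thesis .
  qed
  show ?thesis
  proof (rule doubly_substochastic_powr_sum_le[OF K finite_lessThan p])
    fix i assume i: "i \<in> K"
    show "(\<Sum>j<d. ((b i j)\<^sup>2 + (c i j)\<^sup>2) / 2) \<le> 1"
      using b_rows[OF i] c_rows[OF i] by (simp add: sum_divide_distrib[symmetric] sum.distrib)
  next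
    fix j assume "j \<in> {..<d}"
    then show "(\<Sum>i\<in>K. ((b i j)\<^sup>2 + (c i j)\<^sup>2) / 2) \<le> 1"
      using b_cols[of j] c_cols[of j] by (simp add: sum_divide_distrib[symmetric] sum.distrib)
  qed (use x_le \<sigma> in auto)
qed

section \<open>Rank-one and projected matrices\<close>

lemma rank_one_gram_powr_le:
  assumes \<psi>: "eigenbasis d (gram n X) \<psi> \<mu>" and p: "0 \<le> p"
    and X: "\<And>t x. t < n \<Longrightarrow> x < d \<Longrightarrow> X t x = w t * y x" and w: "dot n w w = 1"
  shows "(\<Sum>j<d. sqrt (\<mu> j) powr p) \<le> sqrt (dot d y y) powr p"
proof -
  have orth: "orthonormal d {..<d} \<psi>"
    using \<psi> unfolding eigenbasis_def by blast
  define q where "q j = dot d y (\<psi> j)" for j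
  have gram: "gram n X a b = y a * y b" if "a < d" "b < d" for a b
  proof -
    have "gram n X a b = y a * y b * dot n w w"
      unfolding gram_def dot_def using X that by (simp add: sum_distrib_left mult_ac)
    then show ?thesis
      using w by simp
  qed
  have ev: "\<mu> j * \<psi> j a = q j * y a" if j: "j < d" and a: "a < d" for j a
  proof -
    have "\<mu> j * \<psi> j a = matvec d (gram n X) (\<psi> j) a"
      using \<psi> j a unfolding eigenbasis_def by simp
    also have "\<dots> = q j * y a"
      unfolding matvec_def q_def dot_def using a by (simp add: gram sum_distrib_left mult_ac)
    finally show ?thesis .
  qed
  have \<mu>: "\<mu> j = (q j)\<^sup>2" if j: "j < d" for j
  proof -
    have "\<mu> j = dot d (\<psi> j) (\<lambda>a. \<mu> j * \<psi> j a)"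
      using orth j unfolding orthonormal_def by (simp add: dot_scale_right)
    also have "\<dots> = dot d (\<psi> j) (\<lambda>a. q j * y a)"
      using ev j by (intro dot_cong) auto
    finally show ?thesis
      unfolding dot_scale_right q_def by (simp add: dot_commute power2_eq_square)
  qed
  have q_le: "(q j)\<^sup>2 \<le> dot d y y" if "j < d" for j
    unfolding parseval_identity[OF orth, of y y] power2_eq_square[symmetric] q_def[symmetric]
    using that by (intro member_le_sum) auto
  \<comment> \<open>Eigenvectors with nonzero eigenvalue are parallel to \<open>y\<close>, so there is at most one of them.\<close>
  have unique: "j = k" if j: "j < d" "q j \<noteq> 0" and k: "k < d" "q k \<noteq> 0" for j k
  proof (rule ccontr)
    assume "j \<noteq> k"
    have "\<mu> j * \<mu> k * dot d (\<psi> j) (\<psi> k) = dot d (\<lambda>a. \<mu> j * \<psi> j a) (\<lambda>a. \<mu> k * \<psi> k a)"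
      by (simp add: dot_scale_left dot_scale_right)
    also have "\<dots> = dot d (\<lambda>a. q j * y a) (\<lambda>a. q k * y a)"
      using ev j k by (intro dot_cong) auto
    also have "\<dots> = q j * q k * dot d y y"
      by (simp add: dot_scale_left dot_scale_right)
    finally have "q j * q k * dot d y y = 0"
      using orth j k \<open>j \<noteq> k\<close> unfolding orthonormal_def by simp
    moreover have "0 < (q j)\<^sup>2"
      using j by simp
    ultimately show False
      using q_le[OF j(1)] k by simp
  qed
  define P where "P = {j. j < d \<and> q j \<noteq> 0}"
  have "card P \<le> 1"
    using card_le_Suc0_iff_eq[of P] unique unfolding P_def by auto
  have "(\<Sum>j<d. sqrt (\<mu> j) powr p) = (\<Sum>j\<in>P. sqrt (\<mu> j) powr p)"
    using \<mu> unfolding P_def by (intro sum.mono_neutral_right) auto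
  also have "\<dots> \<le> of_nat (card P) * sqrt (dot d y y) powr p"
    using \<mu> q_le p unfolding P_def by (intro sum_bounded_above powr_mono2) (auto simp: real_le_rsqrt)
  also have "\<dots> \<le> sqrt (dot d y y) powr p"
    using \<open>card P \<le> 1\<close> by (intro mult_left_le_one_le) auto
  finally show ?thesis .
qed

lemma eigenvector_orthogonal_kernel:
  assumes X: "sym_matrix m X" and \<psi>: "eigenbasis m X \<psi> \<mu>" and j: "j < m" "\<mu> j \<noteq> 0"
    and v: "\<And>a. a < m \<Longrightarrow> matvec m X v a = 0"
  shows "dot m (\<psi> j) v = 0"
proof -
  have "\<mu> j * dot m (\<psi> j) v = dot m (matvec m X (\<psi> j)) v"
    unfolding dot_scale_left[symmetric] using \<psi> j unfolding eigenbasis_def by (intro dot_cong) auto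
  also have "\<dots> = dot m (\<psi> j) (matvec m X v)"
    by (rule dot_matvec_sym[OF X, symmetric])
  also have "\<dots> = 0"
    unfolding dot_def using v by simp
  finally show ?thesis
    using j by simp
qed

lemma orthonormal_insert_None:
  assumes "orthonormal m J f" "dot m z z = 1" "\<And>j. j \<in> J \<Longrightarrow> dot m z (f j) = 0"
  shows "orthonormal m (insert None (Some ` J)) (case_option z f)"
  using assms unfolding orthonormal_def by (auto simp: dot_commute[of m "f _" z])

lemma projection_complement_powr_le:
  assumes \<psi>: "eigenbasis d (gram n A) \<psi> \<mu>" and \<phi>: "eigenbasis d (gram n B) \<phi> \<nu>"
    and B: "\<And>t x. t < n \<Longrightarrow> x < d \<Longrightarrow> B t x = A t x - matvec d A v t * v x"
    and w: "dot n w w = 1" and v: "dot d v v = 1"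
    and Atw: "\<And>x. x < d \<Longrightarrow> (\<Sum>t<n. A t x * w t) = \<alpha> * v x" and \<alpha>: "0 \<le> \<alpha>" and p: "1 \<le> p"
  shows "\<alpha> powr p + (\<Sum>j<d. sqrt (\<nu> j) powr p) \<le> (\<Sum>j<d. sqrt (\<mu> j) powr p)"
proof -
  define J where "J = {j. j < d \<and> 0 < \<nu> j}"
  define u where "u j = (\<lambda>t. matvec d B (\<phi> j) t / sqrt (\<nu> j))" for j
  define K where "K = insert None (Some ` J)"
  have wA: "dot n w (matvec d A x) = \<alpha> * dot d v x" for x
  proof -
    have "dot n w (matvec d A x) = (\<Sum>t<n. \<Sum>y<d. x y * (A t y * w t))"
      unfolding dot_def matvec_def by (simp add: sum_distrib_left mult_ac)
    also have "\<dots> = (\<Sum>y<d. x y * (\<Sum>t<n. A t y * w t))"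
      by (subst sum.swap) (simp add: sum_distrib_left)
    also have "\<dots> = \<alpha> * dot d v x"
      unfolding dot_def using Atw by (simp add: sum_distrib_left mult_ac)
    finally show ?thesis .
  qed
  have Bx: "matvec d B x t = matvec d A x t - matvec d A v t * dot d v x" if "t < n" for x t
  proof -
    have "matvec d B x t = (\<Sum>y<d. A t y * x y - matvec d A v t * (v y * x y))"
      unfolding matvec_def[of d B] using that by (intro sum.cong) (simp_all add: B algebra_simps)
    then show ?thesis
      unfolding matvec_def[of d A x] dot_def by (simp add: sum_subtractf sum_distrib_left)
  qed
  have wB: "dot n w (matvec d B x) = 0" for x
  proof -
    have "dot n w (matvec d B x) = dot n w (\<lambda>t. matvec d A x t - dot d v x * matvec d A v t)"
      by (intro dot_cong) (simp_all add: Bx mult.commute)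
    also have "\<dots> = dot n w (matvec d A x) - dot d v x * dot n w (matvec d A v)"
      unfolding dot_def[of n] by (simp add: sum_subtractf sum_distrib_left algebra_simps)
    finally have "dot n w (matvec d B x) = dot n w (matvec d A x) - dot d v x * dot n w (matvec d A v)" .
    then show ?thesis
      using v by (simp add: wA)
  qed
  have Bv: "matvec d B v t = 0" if "t < n" for t
    using Bx[OF that, of v] v by simp
  have \<phi>v: "dot d (\<phi> j) v = 0" if "j \<in> J" for j
    using that Bv unfolding J_def
    by (intro eigenvector_orthogonal_kernel[OF sym_matrix_gram \<phi>]) (auto simp: matvec_gram)
  have A\<phi>: "matvec d A (\<phi> j) t = matvec d B (\<phi> j) t" if "j \<in> J" "t < n" for j t
    using Bx[of t "\<phi> j"] \<phi>v[of j] that by (simp add: dot_commute)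
  have e: "orthonormal d K (case_option v \<phi>)"
    unfolding K_def using \<phi> v \<phi>v
    by (intro orthonormal_insert_None) (auto simp: eigenbasis_def orthonormal_def J_def dot_commute)
  have wu: "dot n w (u j) = 0" for j
    using wB[of "\<phi> j"] unfolding u_def dot_def by (simp add: sum_divide_distrib[symmetric])
  have u: "orthonormal n K (case_option w u)"
    unfolding K_def using w wu eigenbasis_gram_normalized_images[OF \<phi>]
    by (intro orthonormal_insert_None) (auto simp: orthonormal_def J_def u_def)
  have u\<phi>: "dot n (u j) (matvec d A (\<phi> j)) = sqrt (\<nu> j)" if "j \<in> J" for j
  proof -
    have "dot n (u j) (matvec d A (\<phi> j)) = dot n (\<lambda>t. inverse (sqrt (\<nu> j)) * matvec d B (\<phi> j) t) (matvec d B (\<phi> j))"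
      using A\<phi>[OF that] unfolding u_def by (intro dot_cong) (simp_all add: divide_inverse mult.commute)
    also have "\<dots> = sqrt (\<nu> j)"
      using that eigenbasis_gram_images[OF \<phi>, of j j] real_div_sqrt[of "\<nu> j"]
      unfolding dot_scale_left J_def by (simp add: divide_inverse mult.commute)
    finally show ?thesis .
  qed
  have "(\<Sum>i\<in>K. \<bar>dot n (case_option w u i) (matvec d A (case_option v \<phi> i))\<bar> powr p)
      = \<alpha> powr p + (\<Sum>j\<in>J. sqrt (\<nu> j) powr p)"
    unfolding K_def using \<alpha> v by (simp add: sum.reindex wA u\<phi> J_def)
  also have "(\<Sum>j\<in>J. sqrt (\<nu> j) powr p) = (\<Sum>j<d. sqrt (\<nu> j) powr p)"
    using eigenbasis_gram_nonneg[OF \<phi>] unfolding J_def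
    by (intro sum.mono_neutral_left) (auto simp: order.order_iff_strict)
  finally show ?thesis
    using orthonormal_pairing_powr_le[OF \<psi> p _ u e] unfolding K_def J_def by simp
qed

lemma scalar_prod_eq_dot: "x \<in> carrier_vec m \<Longrightarrow> y \<in> carrier_vec m \<Longrightarrow> x \<bullet> y = dot m (($) x) (($) y)"
  unfolding scalar_prod_def dot_def by (simp add: atLeast0LessThan)

lemma vnorm2_eq_sqrt_dot: "x \<in> carrier_vec m \<Longrightarrow> vnorm2 x = sqrt (dot m (($) x) (($) x))"
  unfolding vnorm2_def by (simp add: scalar_prod_eq_dot)

lemma mult_mat_vec_index_eq_matvec:
  "A \<in> carrier_mat n d \<Longrightarrow> x \<in> carrier_vec d \<Longrightarrow> t < n \<Longrightarrow>
    (A *\<^sub>v x) $ t = matvec d (\<lambda>t y. A $$ (t, y)) (($) x) t"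
  unfolding matvec_def by (simp add: scalar_prod_def atLeast0LessThan)

lemma transpose_mult_vec_index:
  "A \<in> carrier_mat n d \<Longrightarrow> w \<in> carrier_vec n \<Longrightarrow> x < d \<Longrightarrow>
    (transpose_mat A *\<^sub>v w) $ x = (\<Sum>t<n. A $$ (t, x) * w $ t)"
  by (simp add: scalar_prod_def atLeast0LessThan)

lemma outer_prod_mult_index:
  assumes "A \<in> carrier_mat n d" "w \<in> carrier_vec n" "t < n" "x < d"
  shows "(outer_prod w w * A) $$ (t, x) = w $ t * (transpose_mat A *\<^sub>v w) $ x"
  using assms unfolding outer_prod_def
  by (simp add: scalar_prod_def atLeast0LessThan sum_distrib_left mult_ac)

lemma mult_one_minus_outer_prod_index:
  assumes "A \<in> carrier_mat n d" "v \<in> carrier_vec d" "t < n" "x < d"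
  shows "(A * (1\<^sub>m d - outer_prod v v)) $$ (t, x) = A $$ (t, x) - (A *\<^sub>v v) $ t * v $ x"
proof -
  have "(A * (1\<^sub>m d - outer_prod v v)) $$ (t, x)
      = (\<Sum>y<d. A $$ (t, y) * ((if y = x then 1 else 0) - v $ y * v $ x))"
    using assms unfolding outer_prod_def by (simp add: scalar_prod_def atLeast0LessThan)
  also have "\<dots> = (\<Sum>y<d. (if y = x then A $$ (t, y) else 0) - A $$ (t, y) * v $ y * v $ x)"
    by (intro sum.cong) (auto simp: algebra_simps)
  also have "\<dots> = (\<Sum>y<d. (if y = x then A $$ (t, y) else 0)) - (\<Sum>y<d. A $$ (t, y) * v $ y) * v $ x"
    by (simp only: sum_subtractf sum_distrib_right)
  finally show ?thesis
    using assms by (simp add: scalar_prod_def atLeast0LessThan)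
qed

lemma normalized_vector:
  assumes a: "a \<in> carrier_vec d" "a \<noteq> 0\<^sub>v d" and v: "v = (1 / vnorm2 a) \<cdot>\<^sub>v a"
  shows "0 < vnorm2 a" "dot d (($) v) (($) v) = 1" "\<And>x. x < d \<Longrightarrow> a $ x = vnorm2 a * v $ x"
proof -
  have "\<not> (\<forall>x<d. a $ x = 0)"
    using a by (metis eq_vecI carrier_vecD index_zero_vec)
  then have "0 < dot d (($) a) (($) a)"
    using dot_self_nonneg dot_self_eq_0_iff by (metis order_less_le)
  then show pos: "0 < vnorm2 a"
    by (simp add: vnorm2_eq_sqrt_dot[OF a(1)])
  have "dot d (($) v) (($) v) = (1 / vnorm2 a) * ((1 / vnorm2 a) * dot d (($) a) (($) a))"
    unfolding v using a(1) by (simp add: dot_def sum_distrib_left mult_ac)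
  then show "dot d (($) v) (($) v) = 1"
    using pos \<open>0 < dot d _ _\<close> by (simp add: vnorm2_eq_sqrt_dot[OF a(1)])
  show "a $ x = vnorm2 a * v $ x" if "x < d" for x
    using pos that a(1) unfolding v by simp
qed

lemma schatten_norm_powr_rank_one_le:
  assumes A: "A \<in> carrier_mat n d" and w: "w \<in> carrier_vec n" "vnorm2 w = 1" and p: "0 < p"
  shows "schatten_norm p (outer_prod w w * A) powr p \<le> vnorm2 (transpose_mat A *\<^sub>v w) powr p"
proof -
  have W: "outer_prod w w * A \<in> carrier_mat n d"
    using A w unfolding outer_prod_def by auto
  have a: "transpose_mat A *\<^sub>v w \<in> carrier_vec d"
    using A by (intro carrier_vecI) simp
  have "p \<noteq> 0"
    using p by simp
  then obtain \<psi> \<mu> where \<psi>: "eigenbasis d (gram n (\<lambda>t x. (outer_prod w w * A) $$ (t, x))) \<psi> \<mu>"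
    and S: "schatten_norm p (outer_prod w w * A) powr p = (\<Sum>j<d. sqrt (\<mu> j) powr p)"
    by (rule schatten_norm_powr_eigenvalues[OF W])
  have "dot n (($) w) (($) w) = 1"
    using w vnorm2_eq_sqrt_dot[OF w(1)] by simp
  then show ?thesis
    unfolding S vnorm2_eq_sqrt_dot[OF a] using p
    by (intro rank_one_gram_powr_le[OF \<psi>]) (simp_all add: outer_prod_mult_index[OF A w(1)])
qed

lemma schatten_norm_powr_projection_le:
  assumes A: "A \<in> carrier_mat n d" and w: "w \<in> carrier_vec n" "vnorm2 w = 1"
    and a: "transpose_mat A *\<^sub>v w \<noteq> 0\<^sub>v d"
    and v: "v = (1 / vnorm2 (transpose_mat A *\<^sub>v w)) \<cdot>\<^sub>v (transpose_mat A *\<^sub>v w)"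
    and p: "1 \<le> p"
  shows "vnorm2 (transpose_mat A *\<^sub>v w) powr p + schatten_norm p (A * (1\<^sub>m d - outer_prod v v)) powr p
    \<le> schatten_norm p A powr p"
proof -
  have a_carrier: "transpose_mat A *\<^sub>v w \<in> carrier_vec d"
    using A by (intro carrier_vecI) simp
  then have vc: "v \<in> carrier_vec d"
    unfolding v by simp
  note \<alpha> = normalized_vector[OF a_carrier a v]
  have B: "A * (1\<^sub>m d - outer_prod v v) \<in> carrier_mat n d"
    using A vc unfolding outer_prod_def by auto
  have "p \<noteq> 0"
    using p by simp
  then obtain \<psi> \<mu> where \<psi>: "eigenbasis d (gram n (\<lambda>t x. A $$ (t, x))) \<psi> \<mu>"
    and SA: "schatten_norm p A powr p = (\<Sum>j<d. sqrt (\<mu> j) powr p)"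
    by (rule schatten_norm_powr_eigenvalues[OF A])
  from \<open>p \<noteq> 0\<close> obtain \<phi> \<nu> where \<phi>: "eigenbasis d (gram n (\<lambda>t x. (A * (1\<^sub>m d - outer_prod v v)) $$ (t, x))) \<phi> \<nu>"
    and SB: "schatten_norm p (A * (1\<^sub>m d - outer_prod v v)) powr p = (\<Sum>j<d. sqrt (\<nu> j) powr p)"
    by (rule schatten_norm_powr_eigenvalues[OF B])
  have Atw: "(\<Sum>t<n. A $$ (t, x) * w $ t) = vnorm2 (transpose_mat A *\<^sub>v w) * v $ x" if "x < d" for x
    using \<alpha>(3)[OF that] transpose_mult_vec_index[OF A w(1) that] by simp
  have "dot n (($) w) (($) w) = 1"
    using w vnorm2_eq_sqrt_dot[OF w(1)] by simp
  then show ?thesis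
    unfolding SA SB using \<alpha>(1,2) Atw p
    by (intro projection_complement_powr_le[OF \<psi> \<phi>])
      (simp_all add: mult_one_minus_outer_prod_index[OF A vc] mult_mat_vec_index_eq_matvec[OF A vc])
qed

theorem lemma7p5:
  fixes p :: real and n d :: nat and A :: "real mat" and w v :: "real vec"
  assumes "p \<ge> 1"
    and "A \<in> carrier_mat n d"
    and "w \<in> carrier_vec n"
    and "vnorm2 w = 1"
    and "transpose_mat A *\<^sub>v w \<noteq> 0\<^sub>v d"
    and "v = (1 / vnorm2 (transpose_mat A *\<^sub>v w)) \<cdot>\<^sub>v (transpose_mat A *\<^sub>v w)"
  shows "schatten_norm p A powr p \<ge>
           schatten_norm p (outer_prod w w * A) powr p
         + schatten_norm p (A * (1\<^sub>m d - outer_prod v v)) powr p"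
proof -
  have "0 < p"
    using assms(1) by simp
  then show ?thesis
    using schatten_norm_powr_rank_one_le[OF assms(2-4)] schatten_norm_powr_projection_le[OF assms(2-6,1)]
    by fastforce
qed

end
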